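(* Let $n\le l$ be positive integers, let $L_l=\{a_1<\dots<a_l\}$ be the linearly ordered semilattice of $l$ elements, and let $t(X)=s(X)$ be an equation over $L_l$ in the variables $X=\{x_1,\dots,x_n\}$ in which every variable occurs, with solution set $Y=V(t(X)=s(X))$. Then $Y=\bigcup_\sigma Y_\sigma$, the union over all permutations $\sigma$ of $\{1,\dots,n\}$ of the first or second kind, is the decomposition of $Y$ into its irreducible components (i.e. each $Y_\sigma$ is irreducible and $Y_\sigma\not\subseteq Y_{\sigma'}$ for $\sigma\neq\sigma'$). In particular, the number of irreducible components of $Y$ equals the number of permutations of $\{1,\dots,n\}$ of the first and second kind.
   Context: $L_l$ has multiplication $a_ia_j=a_{\min(i,j)}$. A term is a commutative word in $x_1,\dots,x_n$; $\mathrm{Var}(t)$ is the set of variables occurring in $t$. An equation is an ordered pair of terms $t(X)=s(X)$; $P\in L_l^n$ is a solution if $t(P)=s(P)$; $x\le y$ abbreviates $xy=x$. For a system $S$, $V(S)$ is its set of common solutions; $Y\subseteq L_l^n$ is algebraic if $Y=V(S)$ for some system $S$; an algebraic set is irreducible if it is not a proper finite union of other algebraic sets. Every algebraic set is uniquely (up to order) a finite union $Y_1\cup\dots\cup Y_m$ of irreducible algebraic sets with $Y_i\not\subseteq Y_j$ for $i\ne j$; these $Y_i$ are its irreducible components. A permutation $\sigma$ of $\{1,\dots,n\}$ is of the first kind if $x_{\sigma(1)}\in\mathrm{Var}(t)\cap\mathrm{Var}(s)$, and of the second kind if $x_{\sigma(1)}\in\mathrm{Var}(s)\setminus\mathrm{Var}(t)$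 and $x_{\sigma(2)}\in\mathrm{Var}(t)\setminus\mathrm{Var}(s)$. For $\sigma$ of the first kind, $Y_\sigma=V(\{x_{\sigma(i)}\le x_{\sigma(i+1)}:1\le i\le n-1\})$; for $\sigma$ of the second kind, $Y_\sigma=V(\{x_{\sigma(1)}=x_{\sigma(2)}\}\cup\{x_{\sigma(i)}\le x_{\sigma(i+1)}:2\le i\le n-1\})$. *)

theory Defs
  imports "HOL-Library.FuncSet" "HOL-Combinatorics.Permutations"
begin

text \<open>The semilattice L_l = {a_1 < ... < a_l} is represented by the indices {1..l},
  with multiplication a_i a_j = a_(min i j).  A term (commutative word) is a nonempty list of variable
  indices; its value at a point P is the product (= minimum) of the values of its letters.\<close>

type_synonym wterm = "nat list"

definition Var :: "wterm \<Rightarrow> nat set" where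
  "Var t = set t"

definition is_term :: "nat \<Rightarrow> wterm \<Rightarrow> bool" where
  "is_term n t \<longleftrightarrow> t \<noteq> [] \<and> set t \<subseteq> {1..n}"

definition eval_term :: "(nat \<Rightarrow> nat) \<Rightarrow> wterm \<Rightarrow> nat" where
  "eval_term P t = Min (P ` set t)"

definition points :: "nat \<Rightarrow> nat \<Rightarrow> (nat \<Rightarrow> nat) set" where
  "points l n = {1..n} \<rightarrow>\<^sub>E {1..l}"

definition is_equation :: "nat \<Rightarrow> wterm \<times> wterm \<Rightarrow> bool" where
  "is_equation n e \<longleftrightarrow> is_term n (fst e) \<and> is_term n (snd e)"

definition V :: "nat \<Rightarrow> nat \<Rightarrow> (wterm \<times> wterm) set \<Rightarrow> (nat \<Rightarrow> nat) set" where
  "V l n S = {P \<in> points l n. \<forall>e\<in>S. eval_term P (fst e) = eval_term P (snd e)}"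

definition algebraic :: "nat \<Rightarrow> nat \<Rightarrow> (nat \<Rightarrow> nat) set \<Rightarrow> bool" where
  "algebraic l n Y \<longleftrightarrow> (\<exists>S. (\<forall>e\<in>S. is_equation n e) \<and> Y = V l n S)"

definition irreducible :: "nat \<Rightarrow> nat \<Rightarrow> (nat \<Rightarrow> nat) set \<Rightarrow> bool" where
  "irreducible l n Y \<longleftrightarrow> algebraic l n Y \<and>
     (\<forall>F. finite F \<and> (\<forall>Z\<in>F. algebraic l n Z) \<and> Y = \<Union>F \<longrightarrow> Y \<in> F)"

text \<open>x <= y abbreviates the equation x y = x.\<close>
definition leq_eq :: "nat \<Rightarrow> nat \<Rightarrow> wterm \<times> wterm" where
  "leq_eq i j = ([i, j], [i])"

definition first_kind :: "wterm \<Rightarrow> wterm \<Rightarrow> (nat \<Rightarrow> nat) \<Rightarrow> bool" where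
  "first_kind t s \<sigma> \<longleftrightarrow> \<sigma> 1 \<in> Var t \<inter> Var s"

definition second_kind :: "wterm \<Rightarrow> wterm \<Rightarrow> (nat \<Rightarrow> nat) \<Rightarrow> bool" where
  "second_kind t s \<sigma> \<longleftrightarrow> \<sigma> 1 \<in> Var s - Var t \<and> \<sigma> 2 \<in> Var t - Var s"

definition Y_first :: "nat \<Rightarrow> nat \<Rightarrow> (nat \<Rightarrow> nat) \<Rightarrow> (nat \<Rightarrow> nat) set" where
  "Y_first l n \<sigma> = V l n {leq_eq (\<sigma> i) (\<sigma> (i + 1)) | i. 1 \<le> i \<and> i \<le> n - 1}"

definition Y_second :: "nat \<Rightarrow> nat \<Rightarrow> (nat \<Rightarrow> nat) \<Rightarrow> (nat \<Rightarrow> nat) set" where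
  "Y_second l n \<sigma> = V l n ({([\<sigma> 1], [\<sigma> 2])} \<union>
      {leq_eq (\<sigma> i) (\<sigma> (i + 1)) | i. 2 \<le> i \<and> i \<le> n - 1})"

definition Y_sigma :: "nat \<Rightarrow> nat \<Rightarrow> wterm \<Rightarrow> wterm \<Rightarrow> (nat \<Rightarrow> nat) \<Rightarrow> (nat \<Rightarrow> nat) set" where
  "Y_sigma l n t s \<sigma> = (if first_kind t s \<sigma> then Y_first l n \<sigma> else Y_second l n \<sigma>)"

definition kind_perms :: "nat \<Rightarrow> wterm \<Rightarrow> wterm \<Rightarrow> (nat \<Rightarrow> nat) set" where
  "kind_perms n t s = {\<sigma>. \<sigma> permutes {1..n} \<and> (first_kind t s \<sigma> \<or> second_kind t s \<sigma>)}"

end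

theory Submission
  imports Defs
begin

text \<open>A point lies in \<open>Y_sigma\<close> iff its coordinates are nondecreasing along
  \<open>x_\<sigma>1, \<dots>, x_\<sigma>n\<close> (with \<open>x_\<sigma>1 = x_\<sigma>2\<close> for the second kind), and on such points
  every term takes the value of its \<open>\<sigma>\<close>-earliest variable. Sorting the coordinates of a
  solution, with ties broken so that a common variable of \<open>t\<close> and \<open>s\<close> attaining the
  minimum (or else minimisers from \<open>s\<close> and from \<open>t\<close>) come first, covers \<open>V(t = s)\<close> by
  the \<open>Y_sigma\<close>. Each \<open>Y_sigma\<close> has a generic point, taking the values
  \<open>1, 2, \<dots>, n\<close> (resp. \<open>1, 1, 2, \<dots>, n - 1\<close>) along \<open>\<sigma>\<close>: every equation it
  satisfies holds on all of \<open>Y_sigma\<close>, so any algebraic set containing it contains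
  \<open>Y_sigma\<close>, which gives irreducibility. It lies in \<open>Y_sigma'\<close> only if \<open>inv \<sigma> \<circ> \<sigma>'\<close>
  rearranges its sorted profile into itself, and this forces \<open>\<sigma>' = \<sigma>\<close>.\<close>

definition sorted_along :: "nat \<Rightarrow> (nat \<Rightarrow> nat) \<Rightarrow> (nat \<Rightarrow> 'a::linorder) \<Rightarrow> bool" where
  "sorted_along n \<sigma> P \<longleftrightarrow> sorted (map (P \<circ> \<sigma>) [1..<Suc n])"

lemma sorted_along_iff_Suc:
  "sorted_along n \<sigma> P \<longleftrightarrow> (\<forall>i. 1 \<le> i \<longrightarrow> i < n \<longrightarrow> P (\<sigma> i) \<le> P (\<sigma> (Suc i)))"
proof -
  have "sorted_along n \<sigma> P \<longleftrightarrow> (\<forall>i. Suc i < n \<longrightarrow> P (\<sigma> (Suc i)) \<le> P (\<sigma> (Suc (Suc i))))"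
    by (auto simp: sorted_along_def sorted_iff_nth_Suc simp del: upt_Suc)
  also have "\<dots> \<longleftrightarrow> (\<forall>i. 1 \<le> i \<longrightarrow> i < n \<longrightarrow> P (\<sigma> i) \<le> P (\<sigma> (Suc i)))"
  proof (intro iffI allI impI)
    fix i :: nat assume "\<forall>i. Suc i < n \<longrightarrow> P (\<sigma> (Suc i)) \<le> P (\<sigma> (Suc (Suc i)))" "1 \<le> i" "i < n"
    then show "P (\<sigma> i) \<le> P (\<sigma> (Suc i))" by (cases i) auto
  qed auto
  finally show ?thesis .
qed

lemma sorted_alongD:
  "sorted_along n \<sigma> P \<Longrightarrow> 1 \<le> i \<Longrightarrow> i \<le> j \<Longrightarrow> j \<le> n \<Longrightarrow> P (\<sigma> i) \<le> P (\<sigma> j)"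
  using sorted_nth_mono[of "map (P \<circ> \<sigma>) [1..<Suc n]" "i - 1" "j - 1"]
  by (simp add: sorted_along_def del: upt_Suc)

lemma sorted_along_rearrangement:
  assumes h: "h permutes {1..n}" and "sorted_along n id g" and "sorted_along n h g"
    and i: "i \<in> {1..n}"
  shows "g (h i) = g i"
proof -
  let ?xs = "[1..<Suc n]"
  have "image_mset g (mset_set {1..n}) = image_mset (g \<circ> h) (mset_set {1..n})"
    using permutes_implies_image_mset_eq[OF h, of "g \<circ> h" g] by simp
  then have "mset (map (g \<circ> h) ?xs) = mset (map g ?xs)"
    by (simp only: mset_map mset_upt atLeastLessThanSuc_atLeastAtMost)
  moreover have "sorted (map (g \<circ> h) ?xs)" "sorted (map g ?xs)"
    using assms(2,3) unfolding sorted_along_def by simp_all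
  ultimately have "map (g \<circ> h) ?xs = map g ?xs"
    using properties_for_sort by metis
  then show ?thesis
    using i by (simp add: map_eq_conv del: upt_Suc)
qed

lemma exists_sorting_permutation:
  fixes key :: "nat \<Rightarrow> 'a::linorder"
  shows "\<exists>\<sigma>. \<sigma> permutes {1..n} \<and> sorted_along n \<sigma> key"
proof -
  define xs where "xs = sort_key key [1..<Suc n]"
  have xs: "distinct xs" "set xs = {1..n}" "length xs = n" "sorted (map key xs)"
    by (auto simp: xs_def simp del: upt_Suc)
  define \<sigma> where "\<sigma> i = (if i \<in> {1..n} then xs ! (i - 1) else i)" for i
  have "bij_betw \<sigma> {1..n} {1..n}"
  proof (rule bij_betw_imageI)
    show "inj_on \<sigma> {1..n}"
      using xs(1,3) by (auto simp: inj_on_def \<sigma>_def nth_eq_iff_index_eq)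
    show "\<sigma> ` {1..n} = {1..n}"
    proof -
      have "\<sigma> ` {1..n} = (\<lambda>i. xs ! (i - 1)) ` {1..n}"
        by (simp add: \<sigma>_def)
      also have "\<dots> = set xs"
        unfolding set_conv_nth using xs(3) by (force simp: image_def)
      finally show ?thesis using xs(2) by simp
    qed
  qed
  then have "\<sigma> permutes {1..n}"
    by (rule bij_imp_permutes) (auto simp: \<sigma>_def)
  moreover have "map (key \<circ> \<sigma>) [1..<Suc n] = map key xs"
    using xs(3) by (auto simp: \<sigma>_def list_eq_iff_nth_eq simp del: upt_Suc)
  ultimately show ?thesis
    using xs(4) unfolding sorted_along_def by auto
qed

lemma sorted_along_first_of:
  fixes key :: "nat \<Rightarrow> 'a::linorder"
  assumes "sorted_along n \<sigma> key" and "k \<ge> 1" and "x \<in> \<sigma> ` {k..n}"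
    and "\<forall>y\<in>\<sigma> ` {k..n}. y \<noteq> x \<longrightarrow> key x < key y"
  shows "\<sigma> k = x"
proof (rule ccontr)
  assume "\<sigma> k \<noteq> x"
  obtain j where j: "j \<in> {k..n}" "x = \<sigma> j" using assms(3) by blast
  then have "key (\<sigma> k) \<le> key x"
    using sorted_alongD[OF assms(1)] assms(2) by simp
  moreover have "key x < key (\<sigma> k)"
    using assms(4) \<open>\<sigma> k \<noteq> x\<close> j by auto
  ultimately show False by simp
qed

lemma sorted_along_tiebreak:
  assumes "sorted_along n \<sigma> (\<lambda>x. 3 * P x + c x)" and "\<forall>x. c x \<le> (2::nat)"
  shows "sorted_along n \<sigma> P"
  unfolding sorted_along_iff_Suc
proof (intro allI impI)
  fix i :: nat assume "1 \<le> i" "i < n"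
  then have "3 * P (\<sigma> i) + c (\<sigma> i) \<le> 3 * P (\<sigma> (Suc i)) + c (\<sigma> (Suc i))"
    using assms(1) unfolding sorted_along_iff_Suc by blast
  then show "P (\<sigma> i) \<le> P (\<sigma> (Suc i))"
    using spec[OF assms(2), of "\<sigma> (Suc i)"] by linarith
qed

lemma eval_term_singleton [simp]: "eval_term P [x] = P x"
  by (simp add: eval_term_def)

lemma eval_term_pair [simp]: "eval_term P [x, y] = min (P x) (P y)"
  by (simp add: eval_term_def)

lemma chain_equations_hold_iff:
  assumes "1 \<le> k"
  shows "(\<forall>e\<in>{leq_eq (\<sigma> i) (\<sigma> (i + 1)) | i. k \<le> i \<and> i \<le> n - 1}.
            eval_term P (fst e) = eval_term P (snd e))
      \<longleftrightarrow> (\<forall>i. k \<le> i \<longrightarrow> i < n \<longrightarrow> P (\<sigma> i) \<le> P (\<sigma> (Suc i)))"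
proof -
  have "{leq_eq (\<sigma> i) (\<sigma> (i + 1)) | i. k \<le> i \<and> i \<le> n - 1}
      = (\<lambda>i. leq_eq (\<sigma> i) (\<sigma> (i + 1))) ` {i. k \<le> i \<and> i < n}"
    using assms by auto
  then show ?thesis
    by (simp add: leq_eq_def min_def) blast
qed

lemma mem_Y_first_iff: "P \<in> Y_first l n \<sigma> \<longleftrightarrow> P \<in> points l n \<and> sorted_along n \<sigma> P"
  unfolding Y_first_def V_def sorted_along_iff_Suc
  using chain_equations_hold_iff[of 1 \<sigma> n P] by auto

lemma mem_Y_second_iff:
  "P \<in> Y_second l n \<sigma> \<longleftrightarrow> P \<in> points l n \<and> P (\<sigma> 1) = P (\<sigma> 2) \<and> sorted_along n \<sigma> P"
proof -
  have "sorted_along n \<sigma> P \<longleftrightarrow> (\<forall>i. 2 \<le> i \<longrightarrow> i < n \<longrightarrow> P (\<sigma> i) \<le> P (\<sigma> (Suc i)))"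
    if "P (\<sigma> 1) = P (\<sigma> 2)"
  proof (unfold sorted_along_iff_Suc, intro iffI allI impI)
    fix i :: nat
    assume "\<forall>i. 2 \<le> i \<longrightarrow> i < n \<longrightarrow> P (\<sigma> i) \<le> P (\<sigma> (Suc i))" "1 \<le> i" "i < n"
    then show "P (\<sigma> i) \<le> P (\<sigma> (Suc i))"
      using that by (cases "i = 1") (simp_all add: numeral_2_eq_2)
  qed simp
  then show ?thesis
    unfolding Y_second_def V_def using chain_equations_hold_iff[of 2 \<sigma> n P] by auto
qed

lemma mem_Y_sigma_iff:
  "P \<in> Y_sigma l n t s \<sigma> \<longleftrightarrow>
     P \<in> points l n \<and> sorted_along n \<sigma> P \<and> (first_kind t s \<sigma> \<or> P (\<sigma> 1) = P (\<sigma> 2))"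
  by (auto simp: Y_sigma_def mem_Y_first_iff mem_Y_second_iff)

lemma kind_perms_permutes: "\<sigma> \<in> kind_perms n t s \<Longrightarrow> \<sigma> permutes {1..n}"
  by (simp add: kind_perms_def)

lemma kind_perms_first_in_Var_s: "\<sigma> \<in> kind_perms n t s \<Longrightarrow> \<sigma> 1 \<in> Var s"
  by (auto simp: kind_perms_def first_kind_def second_kind_def)

lemma second_kind_two_le:
  assumes "\<sigma> permutes {1..n}" and "second_kind t s \<sigma>" and "is_term n t"
  shows "2 \<le> n"
proof -
  have "\<sigma> 2 \<in> {1..n}"
    using assms(2,3) by (auto simp: second_kind_def is_term_def Var_def)
  then have "2 \<in> {1..n}"
    using permutes_not_in[OF assms(1)] by (cases "2 \<in> {1..n}") auto
  then show ?thesis by simp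
qed

lemma equation_of_variables:
  assumes "\<sigma> permutes {1..n}" and "i \<in> {1..n}" and "j \<in> {1..n}"
  shows "is_equation n (leq_eq (\<sigma> i) (\<sigma> j))" and "is_equation n ([\<sigma> i], [\<sigma> j])"
  using permutes_in_image[OF assms(1)] assms(2,3)
  by (auto simp: is_equation_def is_term_def leq_eq_def)

lemma algebraic_Y_first:
  assumes "\<sigma> permutes {1..n}"
  shows "algebraic l n (Y_first l n \<sigma>)"
  unfolding algebraic_def Y_first_def
proof (intro exI conjI ballI)
  fix e assume "e \<in> {leq_eq (\<sigma> i) (\<sigma> (i + 1)) | i. 1 \<le> i \<and> i \<le> n - 1}"
  then obtain i where "e = leq_eq (\<sigma> i) (\<sigma> (i + 1))" "i \<in> {1..n}" "i + 1 \<in> {1..n}"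
    by auto
  then show "is_equation n e" using equation_of_variables(1)[OF assms] by simp
qed (rule refl)

lemma algebraic_Y_second:
  assumes "\<sigma> permutes {1..n}" and "2 \<le> n"
  shows "algebraic l n (Y_second l n \<sigma>)"
  unfolding algebraic_def Y_second_def
proof (intro exI conjI ballI)
  fix e
  assume "e \<in> {([\<sigma> 1], [\<sigma> 2])} \<union> {leq_eq (\<sigma> i) (\<sigma> (i + 1)) | i. 2 \<le> i \<and> i \<le> n - 1}"
  then consider "e = ([\<sigma> 1], [\<sigma> 2])"
    | i where "e = leq_eq (\<sigma> i) (\<sigma> (i + 1))" "i \<in> {1..n}" "i + 1 \<in> {1..n}"
    by auto
  then show "is_equation n e"
    by cases (use equation_of_variables[OF assms(1)] assms(2) in simp_all)
qed (rule refl)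

lemma algebraic_Y_sigma:
  assumes "\<sigma> \<in> kind_perms n t s" and "is_term n t"
  shows "algebraic l n (Y_sigma l n t s \<sigma>)"
  using assms second_kind_two_le[of \<sigma> n t s]
  by (auto simp: Y_sigma_def kind_perms_def intro: algebraic_Y_first algebraic_Y_second)

lemma eval_term_eq_least_along:
  assumes "\<sigma> permutes {1..n}" and "sorted_along n \<sigma> P"
    and "x \<in> set u" and "P x = P (\<sigma> 1)" and "set u \<subseteq> {1..n}"
  shows "eval_term P u = P (\<sigma> 1)"
  unfolding eval_term_def
proof (rule Min_eqI)
  show "finite (P ` set u)" by simp
  show "P (\<sigma> 1) \<in> P ` set u" using assms(3,4) by (metis image_eqI)
next
  fix y assume "y \<in> P ` set u"
  then obtain x where x: "x \<in> set u" "y = P x" by blast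
  then have "inv \<sigma> x \<in> {1..n}"
    using assms(1,5) permutes_in_image[OF permutes_inv[OF assms(1)]] by auto
  then have "P (\<sigma> 1) \<le> P (\<sigma> (inv \<sigma> x))"
    using sorted_alongD[OF assms(2)] by simp
  then show "P (\<sigma> 1) \<le> y"
    using x permutes_inverses(1)[OF assms(1)] by simp
qed

lemma Y_sigma_subset_V:
  assumes "\<sigma> \<in> kind_perms n t s" and "is_term n t" and "is_term n s"
  shows "Y_sigma l n t s \<sigma> \<subseteq> V l n {(t, s)}"
proof
  fix P assume P: "P \<in> Y_sigma l n t s \<sigma>"
  have perm: "\<sigma> permutes {1..n}" using kind_perms_permutes[OF assms(1)] .
  have sorted: "sorted_along n \<sigma> P" and "P \<in> points l n"
    using P by (simp_all add: mem_Y_sigma_iff)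
  have vars: "set t \<subseteq> {1..n}" "set s \<subseteq> {1..n}"
    using assms(2,3) by (simp_all add: is_term_def)
  note eval_least = eval_term_eq_least_along[OF perm sorted]
  have "eval_term P t = eval_term P s"
  proof (cases "first_kind t s \<sigma>")
    case True
    then show ?thesis
      using eval_least[of "\<sigma> 1" t] eval_least[of "\<sigma> 1" s] vars by (simp add: first_kind_def Var_def)
  next
    case False
    then have "second_kind t s \<sigma>" "P (\<sigma> 1) = P (\<sigma> 2)"
      using assms(1) P by (simp_all add: kind_perms_def mem_Y_sigma_iff)
    then show ?thesis
      using eval_least[of "\<sigma> 2" t] eval_least[of "\<sigma> 1" s] vars by (simp add: second_kind_def Var_def)
  qed
  then show "P \<in> V l n {(t, s)}"
    using \<open>P \<in> points l n\<close> by (simp add: V_def)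
qed

lemma first_kind_component_through:
  assumes P: "P \<in> points l n" and x0: "x0 \<in> Var t \<inter> Var s" "x0 \<in> {1..n}"
    and least: "\<forall>x\<in>{1..n}. P x0 \<le> P x"
  shows "\<exists>\<sigma>\<in>kind_perms n t s. P \<in> Y_sigma l n t s \<sigma>"
proof -
  \<comment> \<open>sorting by \<open>P\<close>, with \<open>x0\<close> first among its minimisers\<close>
  define key where "key x = 3 * P x + (if x = x0 then 0 else 2)" for x
  obtain \<sigma> where perm: "\<sigma> permutes {1..n}" and sorted: "sorted_along n \<sigma> key"
    using exists_sorting_permutation by blast
  have "\<sigma> 1 = x0"
  proof (rule sorted_along_first_of[OF sorted])
    show "x0 \<in> \<sigma> ` {1..n}" unfolding permutes_image[OF perm] by (rule x0(2))
    show "\<forall>y\<in>\<sigma> ` {1..n}. y \<noteq> x0 \<longrightarrow> key x0 < key y"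
      unfolding permutes_image[OF perm] using least by (fastforce simp: key_def)
  qed simp
  then have "first_kind t s \<sigma>"
    using x0(1) by (simp add: first_kind_def)
  moreover have "sorted_along n \<sigma> P"
    using sorted_along_tiebreak sorted unfolding key_def by simp
  ultimately have "\<sigma> \<in> kind_perms n t s" "P \<in> Y_sigma l n t s \<sigma>"
    using perm P by (simp_all add: kind_perms_def mem_Y_sigma_iff)
  then show ?thesis by blast
qed

lemma second_kind_component_through:
  assumes P: "P \<in> points l n"
    and a: "a \<in> Var t - Var s" "a \<in> {1..n}" and b: "b \<in> Var s - Var t" "b \<in> {1..n}"
    and "P a = P b" and least: "\<forall>x\<in>{1..n}. P b \<le> P x"
  shows "\<exists>\<sigma>\<in>kind_perms n t s. P \<in> Y_sigma l n t s \<sigma>"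
proof -
  \<comment> \<open>sorting by \<open>P\<close>, with \<open>b\<close> and then \<open>a\<close> first among its minimisers\<close>
  define key where "key x = 3 * P x + (if x = b then 0 else if x = a then 1 else 2)" for x
  obtain \<sigma> where perm: "\<sigma> permutes {1..n}" and sorted: "sorted_along n \<sigma> key"
    using exists_sorting_permutation by blast
  have "a \<noteq> b" using a b by blast
  have \<sigma>1: "\<sigma> 1 = b"
  proof (rule sorted_along_first_of[OF sorted])
    show "b \<in> \<sigma> ` {1..n}" unfolding permutes_image[OF perm] by (rule b(2))
    show "\<forall>y\<in>\<sigma> ` {1..n}. y \<noteq> b \<longrightarrow> key b < key y"
      unfolding permutes_image[OF perm] using least by (fastforce simp: key_def)
  qed simp
  have later: "\<sigma> ` {2..n} = {1..n} - {b}"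
  proof -
    have "{1..n} = insert 1 {2..n}" using b(2) by auto
    then have "{1..n} = insert b (\<sigma> ` {2..n})"
      using permutes_image[OF perm] \<sigma>1 by (metis image_insert)
    moreover have "b \<notin> \<sigma> ` {2..n}"
      using \<sigma>1 permutes_inj[OF perm] by (auto simp: inj_eq)
    ultimately show ?thesis by blast
  qed
  have "\<sigma> 2 = a"
  proof (rule sorted_along_first_of[OF sorted])
    show "a \<in> \<sigma> ` {2..n}" using a(2) \<open>a \<noteq> b\<close> by (simp add: later)
    show "\<forall>y\<in>\<sigma> ` {2..n}. y \<noteq> a \<longrightarrow> key a < key y"
      unfolding later using least \<open>a \<noteq> b\<close> \<open>P a = P b\<close> by (fastforce simp: key_def)
  qed simp
  then have "second_kind t s \<sigma>"
    using a(1) b(1) \<sigma>1 by (simp add: second_kind_def)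
  moreover have "sorted_along n \<sigma> P"
    using sorted_along_tiebreak sorted unfolding key_def by simp
  moreover have "P (\<sigma> 1) = P (\<sigma> 2)"
    using \<sigma>1 \<open>\<sigma> 2 = a\<close> \<open>P a = P b\<close> by simp
  ultimately have "\<sigma> \<in> kind_perms n t s" "P \<in> Y_sigma l n t s \<sigma>"
    using perm P by (simp_all add: kind_perms_def mem_Y_sigma_iff)
  then show ?thesis by blast
qed

lemma V_subset_Union_Y_sigma:
  assumes "is_term n t" and "is_term n s" and "Var t \<union> Var s = {1..n}"
  shows "V l n {(t, s)} \<subseteq> (\<Union>\<sigma>\<in>kind_perms n t s. Y_sigma l n t s \<sigma>)"
proof
  fix P assume "P \<in> V l n {(t, s)}"
  then have P: "P \<in> points l n" and eq: "eval_term P t = eval_term P s"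
    by (simp_all add: V_def)
  have attained: "eval_term P u \<in> P ` set u" if "is_term n u" for u
    using that by (auto simp: eval_term_def is_term_def intro: Min_in)
  have below: "eval_term P u \<le> P x" if "x \<in> set u" for u x
    using that by (simp add: eval_term_def)
  obtain a where a: "a \<in> set t" "P a = eval_term P t"
    using attained[OF assms(1)] by auto
  obtain b where b: "b \<in> set s" "P b = eval_term P t"
    using attained[OF assms(2)] unfolding eq by auto
  have vars: "set t \<subseteq> {1..n}" "set s \<subseteq> {1..n}"
    using assms(3) by (auto simp: Var_def)
  have least: "\<forall>x\<in>{1..n}. eval_term P t \<le> P x"
  proof
    fix x assume "x \<in> {1..n}"
    then have "x \<in> set t \<or> x \<in> set s"
      using assms(3) by (auto simp: Var_def)
    then show "eval_term P t \<le> P x"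
      using below eq by metis
  qed
  have "\<exists>\<sigma>\<in>kind_perms n t s. P \<in> Y_sigma l n t s \<sigma>"
  proof (cases "\<exists>x\<in>set t \<inter> set s. P x = eval_term P t")
    case True
    then obtain x where "x \<in> Var t \<inter> Var s" "P x = eval_term P t"
      by (auto simp: Var_def)
    moreover from this have "x \<in> {1..n}"
      using vars by (auto simp: Var_def)
    ultimately show ?thesis
      using first_kind_component_through[OF P] least by simp
  next
    case False
    then have "a \<in> Var t - Var s" "b \<in> Var s - Var t"
      using a b by (auto simp: Var_def)
    moreover have "a \<in> {1..n}" "b \<in> {1..n}"
      using a(1) b(1) vars by auto
    ultimately show ?thesis
      using second_kind_component_through[OF P] least a(2) b(2) by simp
  qed
  then show "P \<in> (\<Union>\<sigma>\<in>kind_perms n t s. Y_sigma l n t s \<sigma>)" by blast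
qed

lemma irreducibleI_generic_point:
  assumes "algebraic l n Y" and "Q \<in> Y"
    and "\<And>Z. algebraic l n Z \<Longrightarrow> Q \<in> Z \<Longrightarrow> Y \<subseteq> Z"
  shows "irreducible l n Y"
  unfolding irreducible_def
proof (intro conjI allI impI)
  fix F assume F: "finite F \<and> (\<forall>Z\<in>F. algebraic l n Z) \<and> Y = \<Union>F"
  then obtain Z where "Z \<in> F" "Q \<in> Z" using assms(2) by blast
  with F assms(3) have "Y = Z" by blast
  with \<open>Z \<in> F\<close> show "Y \<in> F" by simp
qed (fact assms(1))

lemma mem_algebraic_if_equations_transfer:
  assumes "algebraic l n Z" and "Q \<in> Z" and "P \<in> points l n"
    and "\<And>u v. is_term n u \<Longrightarrow> is_term n v \<Longrightarrow> eval_term Q u = eval_term Q v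
          \<Longrightarrow> eval_term P u = eval_term P v"
  shows "P \<in> Z"
proof -
  obtain S where S: "\<forall>e\<in>S. is_equation n e" "Z = V l n S"
    using assms(1) unfolding algebraic_def by blast
  then show ?thesis
    using assms(2-4) by (auto simp: V_def is_equation_def)
qed

lemma eval_term_along:
  assumes "\<sigma> permutes {1..n}" and "is_term n u"
  shows "\<exists>k\<in>{1..n}. \<forall>P. sorted_along n \<sigma> P \<longrightarrow> eval_term P u = P (\<sigma> k)"
proof -
  let ?ranks = "inv \<sigma> ` set u"
  have "finite ?ranks" "?ranks \<noteq> {}" "?ranks \<subseteq> {1..n}"
    using assms permutes_in_image[OF permutes_inv[OF assms(1)]]
    by (auto simp: is_term_def)
  then have k: "Min ?ranks \<in> ?ranks" "Min ?ranks \<in> {1..n}"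
    using Min_in by blast+
  have "eval_term P u = P (\<sigma> (Min ?ranks))" if "sorted_along n \<sigma> P" for P
    unfolding eval_term_def
  proof (rule Min_eqI)
    show "finite (P ` set u)" by simp
    show "P (\<sigma> (Min ?ranks)) \<in> P ` set u"
      using k(1) permutes_inverses(1)[OF assms(1)] by auto
  next
    fix y assume "y \<in> P ` set u"
    then obtain x where x: "x \<in> set u" "y = P x" by blast
    then have "Min ?ranks \<le> inv \<sigma> x" "inv \<sigma> x \<le> n"
      using \<open>finite ?ranks\<close> \<open>?ranks \<subseteq> {1..n}\<close> by auto
    then have "P (\<sigma> (Min ?ranks)) \<le> P (\<sigma> (inv \<sigma> x))"
      using sorted_alongD[OF that] k(2) by simp
    then show "P (\<sigma> (Min ?ranks)) \<le> y"
      using x permutes_inverses(1)[OF assms(1)] by simp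
  qed
  then show ?thesis using k(2) by blast
qed

lemma equation_transfer_along:
  assumes "\<sigma> permutes {1..n}" and "sorted_along n \<sigma> P" and "sorted_along n \<sigma> Q"
    and ties: "\<And>a b. a \<in> {1..n} \<Longrightarrow> b \<in> {1..n} \<Longrightarrow> Q (\<sigma> a) = Q (\<sigma> b) \<Longrightarrow> P (\<sigma> a) = P (\<sigma> b)"
    and "is_term n u" and "is_term n v" and "eval_term Q u = eval_term Q v"
  shows "eval_term P u = eval_term P v"
proof -
  obtain a where "a \<in> {1..n}" "\<And>R. sorted_along n \<sigma> R \<Longrightarrow> eval_term R u = R (\<sigma> a)"
    using eval_term_along[OF assms(1,5)] by blast
  moreover obtain b where "b \<in> {1..n}" "\<And>R. sorted_along n \<sigma> R \<Longrightarrow> eval_term R v = R (\<sigma> b)"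
    using eval_term_along[OF assms(1,6)] by blast
  ultimately show ?thesis
    using assms(2,3,7) ties by metis
qed

definition point_along :: "nat \<Rightarrow> (nat \<Rightarrow> nat) \<Rightarrow> (nat \<Rightarrow> nat) \<Rightarrow> nat \<Rightarrow> nat" where
  "point_along n \<sigma> g = restrict (g \<circ> inv \<sigma>) {1..n}"

lemma point_along_apply:
  assumes "\<sigma> permutes {1..n}" and "i \<in> {1..n}"
  shows "point_along n \<sigma> g (\<sigma> i) = g i"
  using assms permutes_in_image[OF assms(1)]
  by (simp add: point_along_def permutes_inverses(2)[OF assms(1)])

lemma point_along_in_points:
  assumes "\<sigma> permutes {1..n}" and "g ` {1..n} \<subseteq> {1..l}"
  shows "point_along n \<sigma> g \<in> points l n"
  using assms permutes_in_image[OF permutes_inv[OF assms(1)]]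
  by (auto simp: points_def point_along_def)

lemma sorted_along_point_along:
  assumes "\<sigma> permutes {1..n}" and "\<sigma>' permutes {1..n}"
  shows "sorted_along n \<sigma>' (point_along n \<sigma> g) \<longleftrightarrow> sorted_along n (inv \<sigma> \<circ> \<sigma>') g"
proof -
  have "map (point_along n \<sigma> g \<circ> \<sigma>') [1..<Suc n] = map (g \<circ> (inv \<sigma> \<circ> \<sigma>')) [1..<Suc n]"
    using permutes_in_image[OF assms(2)] by (auto simp: point_along_def simp del: upt_Suc)
  then show ?thesis
    unfolding sorted_along_def by (simp only:)
qed

definition merge_first_two :: "nat \<Rightarrow> nat" where
  "merge_first_two k = max 1 (k - 1)"

lemma permutes_preserving_merge_first_two:
  assumes h: "h permutes {1..n}" and same: "\<forall>i\<in>{1..n}. merge_first_two (h i) = merge_first_two i"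
    and "h 1 \<noteq> 2"
  shows "\<forall>i\<in>{1..n}. h i = i"
proof
  fix i assume i: "i \<in> {1..n}"
  have h_in: "h j \<in> {1..n}" if "j \<in> {1..n}" for j
    using permutes_in_image[OF h] that by blast
  show "h i = i"
  proof (cases "i \<le> 2")
    case True
    have small: "h j \<le> 2" if "j \<in> {1..n}" "j \<le> 2" for j
      using bspec[OF same that(1)] h_in[OF that(1)] that(2) by (auto simp: merge_first_two_def)
    have "h 1 = 1"
      using small[of 1] h_in[of 1] i \<open>h 1 \<noteq> 2\<close> by auto
    moreover have "h 2 = 2" if "2 \<le> n"
      using small[of 2] h_in[of 2] inj_eq[OF permutes_inj[OF h], of 2 1] \<open>h 1 = 1\<close> that by auto
    moreover have "i = 1 \<or> i = 2"
      using True i by auto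
    ultimately show ?thesis
      using i by auto
  next
    case False
    then show ?thesis
      using bspec[OF same i] h_in[OF i] by (auto simp: merge_first_two_def)
  qed
qed

definition kind_profile :: "wterm \<Rightarrow> wterm \<Rightarrow> (nat \<Rightarrow> nat) \<Rightarrow> nat \<Rightarrow> nat" where
  "kind_profile t s \<sigma> = (if first_kind t s \<sigma> then id else merge_first_two)"

definition generic_point :: "nat \<Rightarrow> wterm \<Rightarrow> wterm \<Rightarrow> (nat \<Rightarrow> nat) \<Rightarrow> nat \<Rightarrow> nat" where
  "generic_point n t s \<sigma> = point_along n \<sigma> (kind_profile t s \<sigma>)"

lemma sorted_kind_profile: "sorted_along n id (kind_profile t s \<sigma>)"
  by (auto simp: sorted_along_iff_Suc kind_profile_def merge_first_two_def)

lemma kind_profile_ties: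
  assumes "kind_profile t s \<sigma> a = kind_profile t s \<sigma> b" and "a \<in> {1..n}" and "b \<in> {1..n}"
  shows "a = b \<or> \<not> first_kind t s \<sigma> \<and> {a, b} \<subseteq> {1, 2}"
  using assms by (auto simp: kind_profile_def merge_first_two_def split: if_splits)

lemma generic_point_mem_Y_sigma:
  assumes "n \<le> l" and "\<sigma> \<in> kind_perms n t s" and "is_term n t"
  shows "generic_point n t s \<sigma> \<in> Y_sigma l n t s \<sigma>"
proof -
  have perm: "\<sigma> permutes {1..n}" using kind_perms_permutes[OF assms(2)] .
  have "kind_profile t s \<sigma> ` {1..n} \<subseteq> {1..l}"
    using assms(1) by (auto simp: kind_profile_def merge_first_two_def)
  then have "generic_point n t s \<sigma> \<in> points l n"
    unfolding generic_point_def by (rule point_along_in_points[OF perm])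
  moreover have "sorted_along n \<sigma> (generic_point n t s \<sigma>)"
    using sorted_along_point_along[OF perm perm] sorted_kind_profile
    by (simp add: generic_point_def permutes_inv_o(2)[OF perm])
  moreover have "generic_point n t s \<sigma> (\<sigma> 1) = generic_point n t s \<sigma> (\<sigma> 2)"
    if "\<not> first_kind t s \<sigma>"
  proof -
    have "second_kind t s \<sigma>"
      using assms(2) that by (simp add: kind_perms_def)
    then have "2 \<le> n"
      using second_kind_two_le[OF perm _ assms(3)] by blast
    then show ?thesis
      using that by (simp add: generic_point_def point_along_apply[OF perm] kind_profile_def merge_first_two_def)
  qed
  ultimately show ?thesis by (auto simp: mem_Y_sigma_iff)
qed

lemma Y_sigma_irreducible:
  assumes "n \<le> l" and "\<sigma> \<in> kind_perms n t s" and "is_term n t"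
  shows "irreducible l n (Y_sigma l n t s \<sigma>)"
proof (rule irreducibleI_generic_point)
  show "algebraic l n (Y_sigma l n t s \<sigma>)"
    using algebraic_Y_sigma[OF assms(2,3)] .
  let ?Q = "generic_point n t s \<sigma>"
  show Q: "?Q \<in> Y_sigma l n t s \<sigma>"
    using generic_point_mem_Y_sigma[OF assms] .
  have perm: "\<sigma> permutes {1..n}" using kind_perms_permutes[OF assms(2)] .
  fix Z assume Z: "algebraic l n Z" "?Q \<in> Z"
  show "Y_sigma l n t s \<sigma> \<subseteq> Z"
  proof
    fix P assume P: "P \<in> Y_sigma l n t s \<sigma>"
    then have "P \<in> points l n" "sorted_along n \<sigma> P" "first_kind t s \<sigma> \<or> P (\<sigma> 1) = P (\<sigma> 2)"
      by (simp_all add: mem_Y_sigma_iff)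
    have ties: "P (\<sigma> a) = P (\<sigma> b)"
      if "a \<in> {1..n}" "b \<in> {1..n}" "?Q (\<sigma> a) = ?Q (\<sigma> b)" for a b
    proof -
      have "a = b \<or> \<not> first_kind t s \<sigma> \<and> {a, b} \<subseteq> {1, 2}"
        using kind_profile_ties that
        by (simp add: generic_point_def point_along_apply[OF perm])
      then show ?thesis
        using \<open>first_kind t s \<sigma> \<or> P (\<sigma> 1) = P (\<sigma> 2)\<close> by auto
    qed
    have "sorted_along n \<sigma> ?Q"
      using Q by (simp add: mem_Y_sigma_iff)
    note transfer = equation_transfer_along[OF perm \<open>sorted_along n \<sigma> P\<close> this ties]
    show "P \<in> Z"
      using mem_algebraic_if_equations_transfer[OF Z \<open>P \<in> points l n\<close> transfer] .
  qed
qed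

lemma permutes_eq_if_inv_comp_fixes:
  assumes "\<sigma> permutes A" and "\<sigma>' permutes A" and "\<forall>i\<in>A. inv \<sigma> (\<sigma>' i) = i"
  shows "\<sigma>' = \<sigma>"
proof
  fix x
  show "\<sigma>' x = \<sigma> x"
  proof (cases "x \<in> A")
    case True
    then show ?thesis using assms(3) permutes_inverses(1)[OF assms(1)] by metis
  next
    case False
    then show ?thesis using permutes_not_in assms(1,2) by metis
  qed
qed

lemma generic_point_mem_Y_sigma_imp_eq:
  assumes k: "\<sigma> \<in> kind_perms n t s" and k': "\<sigma>' \<in> kind_perms n t s"
    and Q: "generic_point n t s \<sigma> \<in> Y_sigma l n t s \<sigma>'"
  shows "\<sigma>' = \<sigma>"
proof -
  have perm: "\<sigma> permutes {1..n}" and perm': "\<sigma>' permutes {1..n}"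
    using kind_perms_permutes k k' by blast+
  let ?h = "inv \<sigma> \<circ> \<sigma>'" and ?g = "kind_profile t s \<sigma>"
  have h: "?h permutes {1..n}"
    by (rule permutes_compose[OF perm' permutes_inv[OF perm]])
  have "sorted_along n ?h ?g"
    using Q sorted_along_point_along[OF perm perm'] by (simp add: mem_Y_sigma_iff generic_point_def)
  then have same: "?g (?h i) = ?g i" if "i \<in> {1..n}" for i
    using sorted_along_rearrangement[OF h sorted_kind_profile] that by blast
  have "\<forall>i\<in>{1..n}. ?h i = i"
  proof (cases "first_kind t s \<sigma>")
    case True
    then show ?thesis using same by (simp add: kind_profile_def)
  next
    case False
    \<comment> \<open>the profile \<open>1, 1, 2, \<dots>\<close> is also kept by swapping the first two positions,
      but that would put \<open>\<sigma> 2 \<notin> Var s\<close> in front of \<open>\<sigma>'\<close>\<close>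
    then have "\<sigma> 2 \<notin> Var s"
      using k by (auto simp: kind_perms_def second_kind_def)
    then have "?h 1 \<noteq> 2"
      using kind_perms_first_in_Var_s[OF k'] permutes_inverses(1)[OF perm] by (metis comp_apply)
    then show ?thesis
      using permutes_preserving_merge_first_two[OF h] same False by (simp add: kind_profile_def)
  qed
  then show ?thesis
    using permutes_eq_if_inv_comp_fixes[OF perm perm'] by simp
qed

theorem theorem1:
  fixes n l :: nat and t s :: wterm
  assumes "1 \<le> n" and "n \<le> l"
    and "is_term n t" and "is_term n s"
    and "Var t \<union> Var s = {1..n}"
  shows "V l n {(t, s)} = (\<Union>\<sigma>\<in>kind_perms n t s. Y_sigma l n t s \<sigma>)
    \<and> (\<forall>\<sigma>\<in>kind_perms n t s. irreducible l n (Y_sigma l n t s \<sigma>))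
    \<and> (\<forall>\<sigma>\<in>kind_perms n t s. \<forall>\<sigma>'\<in>kind_perms n t s.
          \<sigma> \<noteq> \<sigma>' \<longrightarrow> \<not> Y_sigma l n t s \<sigma> \<subseteq> Y_sigma l n t s \<sigma>')
    \<and> card ((Y_sigma l n t s) ` kind_perms n t s) = card (kind_perms n t s)"
proof (intro conjI)
  show "V l n {(t, s)} = (\<Union>\<sigma>\<in>kind_perms n t s. Y_sigma l n t s \<sigma>)"
    using V_subset_Union_Y_sigma[OF assms(3-5)] Y_sigma_subset_V[OF _ assms(3,4)] by blast
  show "\<forall>\<sigma>\<in>kind_perms n t s. irreducible l n (Y_sigma l n t s \<sigma>)"
    using Y_sigma_irreducible[OF assms(2) _ assms(3)] by blast
  have incomparable: "\<not> Y_sigma l n t s \<sigma> \<subseteq> Y_sigma l n t s \<sigma>'"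
    if "\<sigma> \<in> kind_perms n t s" "\<sigma>' \<in> kind_perms n t s" "\<sigma> \<noteq> \<sigma>'" for \<sigma> \<sigma>'
    using generic_point_mem_Y_sigma[OF assms(2) that(1) assms(3)]
      generic_point_mem_Y_sigma_imp_eq[OF that(1,2)] that(3) by blast
  then show "\<forall>\<sigma>\<in>kind_perms n t s. \<forall>\<sigma>'\<in>kind_perms n t s.
      \<sigma> \<noteq> \<sigma>' \<longrightarrow> \<not> Y_sigma l n t s \<sigma> \<subseteq> Y_sigma l n t s \<sigma>'"
    by blast
  have "inj_on (Y_sigma l n t s) (kind_perms n t s)"
    using incomparable by (metis inj_onI order_refl)
  then show "card ((Y_sigma l n t s) ` kind_perms n t s) = card (kind_perms n t s)"
    by (rule card_image)
qed

end
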